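(* For all processes $s,t$ of a PTS over $A_\tau=A\cup\{\tau\}$, the weak trace metric satisfies $\mathbf{d}^{\mathrm{w}}(s,t)=0$ if and only if $s$ and $t$ are weak probabilistic trace equivalent.
   Context: A PTS is $(\mathcal{S},A_\tau,\to)$ with $\mathcal{S}$ a countable set of processes, $A_\tau=A\cup\{\tau\}$ ($\tau\notin A$ the silent action), $\to\subseteq\mathcal{S}\times A_\tau\times\Delta(\mathcal{S})$ with $\Delta(\mathcal{S})$ the finitely supported distributions. Standing assumptions: processes are image-finite and finite. Computations $c=s_0\xrightarrow{a_1}s_1\cdots\xrightarrow{a_n}s_n$ use transitions $s_{i-1}\xrightarrow{a_i}\pi_i$ with $s_i\in\mathrm{supp}(\pi_i)$, $\Pr(c)=\prod_i\pi_i(s_i)$; $\mathrm{tr}(c)=a_1\cdots a_n\in A_\tau^\star$; maximal = not a proper prefix of another computation from the same process; $\mathcal{C}_{\max}(z,\alpha)$ = maximal computations from $z$ with trace $\alpha$. A resolution of $s$ is a PTS $\mathcal{Z}=(Z,A_\tau,\to_{\mathcal{Z}})$ with $\mathrm{corr}\colon Z\to\mathcal{S}$ and initial state $z_s$, $\mathrm{corr}(z_s)=s$, such that $z_s$ is in no target support, every other state is in the support of a target of a transition from a different state, every $z\xrightarrow{a}_{\mathcal{Z}}\pi$ is matched by $\mathrm{corr}(z)\xrightarrow{a}\pi'$ with $\pi(z')=\pi'(\mathrm{corr}(z'))$ for all $z'$, and each state has at most one outgoing transition; $\mathrm{res}(s)$ is the set of resolutions of $s$. Two traces $\alpha,\beta\in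 A_\tau^\star$ are equivalent, $\alpha\equiv\beta$, iff they coincide after deleting all occurrences of $\tau$. For $\alpha\in A^\star$, $\mathcal{C}^{\mathrm{w}}(s,\alpha)$ is the set of computations $c$ from $s$ with $\mathrm{tr}(c)\equiv\alpha$ that are not proper prefixes of another computation $c'$ from $s$ with $\mathrm{tr}(c')\equiv\alpha$. Processes $s,t$ are weak probabilistic trace equivalent iff for every $\mathcal{Z}_s\in\mathrm{res}(s)$ (initial state $z_s$) there is $\mathcal{Z}_t\in\mathrm{res}(t)$ (initial state $z_t$) with $\Pr(\mathcal{C}^{\mathrm{w}}(z_s,\alpha))=\Pr(\mathcal{C}^{\mathrm{w}}(z_t,\alpha))$ for all $\alpha\in A^\star$, and symmetrically with $s,t$ swapped. The trace distribution of a resolution is $TD_{\mathcal{Z}}(\alpha)=\Pr(\mathcal{C}_{\max}(z,\alpha))$, $\alpha\in A_\tau^\star$. Kantorovich lifting of a 1-bounded (pseudo)metric $d$ on $X$: $\mathcal{K}(d)(\pi,\pi')=\min_{\omega}\sum_{x,y}\omega(x,y)d(x,y)$ over couplings $\omega$ of $\pi,\pi'$. Hausdorff lifting: $\mathcal{H}(\hat d)(\Pi_1,\Pi_2)=\max\{\sup_{\pi_1\in\Pi_1}\inf_{\pi_2\in\Pi_2}\hat d(\pi_1,\pi_2),\sup_{\pi_2\in\Pi_2}\inf_{\pi_1\in\Pi_1}\hat d(\pi_2,\pi_1)\}$, with $\inf\emptyset=1,\sup\emptyset=0$. Let $d_{\mathrm{w}}(\alpha,\beta)=0$ if $\alpha\equiv\beta$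 and $1$ otherwise; $D_{\mathrm{w}}(\mathcal{Z}_1,\mathcal{Z}_2)=\mathcal{K}(d_{\mathrm{w}})(TD_{\mathcal{Z}_1},TD_{\mathcal{Z}_2})$; the weak trace metric is $\mathbf{d}^{\mathrm{w}}(s,t)=\mathcal{H}(D_{\mathrm{w}})(\mathrm{res}(s),\mathrm{res}(t))$. *)

theory Defs
  imports "HOL-Probability.Probability_Mass_Function" "HOL-Library.Sublist"
begin

datatype 'a act = Tau | Act 'a

text \<open>A PTS over the state type 's is given by its transition relation
  (source, action, target distribution).\<close>
type_synonym ('s, 'a) trans = "('s \<times> 'a act \<times> 's pmf) set"

text \<open>A computation from a state s0 is the list of its steps (a_i, pi_i, s_i).\<close>
type_synonym ('s, 'a) comp = "('a act \<times> 's pmf \<times> 's) list"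

fun valid_comp :: "('s, 'a) trans \<Rightarrow> 's \<Rightarrow> ('s, 'a) comp \<Rightarrow> bool" where
  "valid_comp T s [] = True"
| "valid_comp T s ((a, \<pi>, s') # r) = ((s, a, \<pi>) \<in> T \<and> s' \<in> set_pmf \<pi> \<and> valid_comp T s' r)"

definition comps :: "('s, 'a) trans \<Rightarrow> 's \<Rightarrow> ('s, 'a) comp set" where
  "comps T s = {c. valid_comp T s c}"

definition comp_prob :: "('s, 'a) comp \<Rightarrow> real" where
  "comp_prob c = prod_list (map (\<lambda>(a, \<pi>, s'). pmf \<pi> s') c)"

definition comps_prob :: "('s, 'a) comp set \<Rightarrow> real" where
  "comps_prob C = (\<Sum>c\<in>C. comp_prob c)"

definition tr :: "('s, 'a) comp \<Rightarrow> 'a act list" where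
  "tr c = map fst c"

text \<open>Visible part of a trace (delete all tau); alpha equiv beta iff vis alpha = vis beta.\<close>
fun vis :: "'a act list \<Rightarrow> 'a list" where
  "vis [] = []"
| "vis (Tau # r) = vis r"
| "vis (Act a # r) = a # vis r"

definition maximal_comp :: "('s, 'a) trans \<Rightarrow> 's \<Rightarrow> ('s, 'a) comp \<Rightarrow> bool" where
  "maximal_comp T s c \<longleftrightarrow> c \<in> comps T s \<and> \<not> (\<exists>c'\<in>comps T s. strict_prefix c c')"

definition Cmax :: "('s, 'a) trans \<Rightarrow> 's \<Rightarrow> 'a act list \<Rightarrow> ('s, 'a) comp set" where
  "Cmax T s \<alpha> = {c. maximal_comp T s c \<and> tr c = \<alpha>}"

definition Cw :: "('s, 'a) trans \<Rightarrow> 's \<Rightarrow> 'a list \<Rightarrow> ('s, 'a) comp set" where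
  "Cw T s \<alpha> = {c \<in> comps T s. vis (tr c) = \<alpha> \<and>
      \<not> (\<exists>c'\<in>comps T s. vis (tr c') = \<alpha> \<and> strict_prefix c c')}"

definition image_finite :: "('s, 'a) trans \<Rightarrow> 's \<Rightarrow> bool" where
  "image_finite T s \<longleftrightarrow> finite {(a, \<pi>). (s, a, \<pi>) \<in> T}"

definition finite_proc :: "('s, 'a) trans \<Rightarrow> 's \<Rightarrow> bool" where
  "finite_proc T s \<longleftrightarrow> (\<exists>N. \<forall>c\<in>comps T s. length c \<le> N)"

text \<open>Resolution states are taken from the countable type nat.\<close>
record ('s, 'a) resolution =
  zstates :: "nat set"
  ztrans :: "(nat, 'a) trans"
  zcorr :: "nat \<Rightarrow> 's"
  zinit :: nat

definition is_resolution :: "('s, 'a) trans \<Rightarrow> 's \<Rightarrow> ('s, 'a) resolution \<Rightarrow> bool" where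
  "is_resolution T s Z \<longleftrightarrow>
     zinit Z \<in> zstates Z \<and> zcorr Z (zinit Z) = s \<and>
     (\<forall>(z, a, \<pi>) \<in> ztrans Z. z \<in> zstates Z \<and> set_pmf \<pi> \<subseteq> zstates Z \<and> finite (set_pmf \<pi>)) \<and>
     (\<forall>(z, a, \<pi>) \<in> ztrans Z. zinit Z \<notin> set_pmf \<pi>) \<and>
     (\<forall>z \<in> zstates Z - {zinit Z}. \<exists>z' a \<pi>. (z', a, \<pi>) \<in> ztrans Z \<and> z' \<noteq> z \<and> z \<in> set_pmf \<pi>) \<and>
     (\<forall>(z, a, \<pi>) \<in> ztrans Z. \<exists>\<pi>'. (zcorr Z z, a, \<pi>') \<in> T \<and>
         (\<forall>z' \<in> zstates Z. pmf \<pi> z' = pmf \<pi>' (zcorr Z z'))) \<and>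
     (\<forall>z a1 \<pi>1 a2 \<pi>2. (z, a1, \<pi>1) \<in> ztrans Z \<longrightarrow> (z, a2, \<pi>2) \<in> ztrans Z \<longrightarrow>
         a1 = a2 \<and> \<pi>1 = \<pi>2)"

definition res :: "('s, 'a) trans \<Rightarrow> 's \<Rightarrow> ('s, 'a) resolution set" where
  "res T s = {Z. is_resolution T s Z}"

definition weak_trace_equiv :: "('s, 'a) trans \<Rightarrow> 's \<Rightarrow> 's \<Rightarrow> bool" where
  "weak_trace_equiv T s t \<longleftrightarrow>
     (\<forall>Zs\<in>res T s. \<exists>Zt\<in>res T t. \<forall>\<alpha>.
        comps_prob (Cw (ztrans Zs) (zinit Zs) \<alpha>) = comps_prob (Cw (ztrans Zt) (zinit Zt) \<alpha>)) \<and>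
     (\<forall>Zt\<in>res T t. \<exists>Zs\<in>res T s. \<forall>\<alpha>.
        comps_prob (Cw (ztrans Zt) (zinit Zt) \<alpha>) = comps_prob (Cw (ztrans Zs) (zinit Zs) \<alpha>))"

definition TD :: "('s, 'a) resolution \<Rightarrow> 'a act list \<Rightarrow> real" where
  "TD Z \<alpha> = comps_prob (Cmax (ztrans Z) (zinit Z) \<alpha>)"

definition is_coupling :: "('x \<Rightarrow> real) \<Rightarrow> ('x \<Rightarrow> real) \<Rightarrow> ('x \<times> 'x \<Rightarrow> real) \<Rightarrow> bool" where
  "is_coupling \<mu> \<nu> \<omega> \<longleftrightarrow>
     (\<forall>p. 0 \<le> \<omega> p) \<and> finite {p. \<omega> p \<noteq> 0} \<and>
     (\<forall>x. (\<Sum>y\<in>{y. \<omega> (x, y) \<noteq> 0}. \<omega> (x, y)) = \<mu> x) \<and>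
     (\<forall>y. (\<Sum>x\<in>{x. \<omega> (x, y) \<noteq> 0}. \<omega> (x, y)) = \<nu> y)"

definition kantorovich :: "('x \<Rightarrow> 'x \<Rightarrow> real) \<Rightarrow> ('x \<Rightarrow> real) \<Rightarrow> ('x \<Rightarrow> real) \<Rightarrow> real" where
  "kantorovich d \<mu> \<nu> =
     Inf {(\<Sum>p\<in>{p. \<omega> p \<noteq> 0}. \<omega> p * d (fst p) (snd p)) | \<omega>. is_coupling \<mu> \<nu> \<omega>}"

text \<open>Hausdorff lifting, with inf of empty = 1 and sup of empty = 0.\<close>
definition hausdorff :: "('x \<Rightarrow> 'x \<Rightarrow> real) \<Rightarrow> 'x set \<Rightarrow> 'x set \<Rightarrow> real" where
  "hausdorff D X Y =
     max (if X = {} then 0 else (SUP x\<in>X. if Y = {} then 1 else (INF y\<in>Y. D x y)))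
         (if Y = {} then 0 else (SUP y\<in>Y. if X = {} then 1 else (INF x\<in>X. D y x)))"

definition d_w :: "'a act list \<Rightarrow> 'a act list \<Rightarrow> real" where
  "d_w \<alpha> \<beta> = (if vis \<alpha> = vis \<beta> then 0 else 1)"

definition D_w :: "('s, 'a) resolution \<Rightarrow> ('s, 'a) resolution \<Rightarrow> real" where
  "D_w Z1 Z2 = kantorovich d_w (TD Z1) (TD Z2)"

definition weak_trace_metric :: "('s, 'a) trans \<Rightarrow> 's \<Rightarrow> 's \<Rightarrow> real" where
  "weak_trace_metric T s t = hausdorff D_w (res T s) (res T t)"

end

theory Submission
  imports Defs
begin

text \<open>Resolutions are deterministic, so the probability of the weak computations of a resolution
  for \<open>\<alpha>\<close> is the probability that the visible trace of a maximal computation has \<open>\<alpha>\<close> as a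
  prefix. These prefix probabilities determine the distribution of visible traces and conversely
  (inclusion-exclusion over one-letter extensions). The Kantorovich lifting of the 0/1 distance
  \<open>d_w\<close> vanishes exactly when the two trace distributions have the same image under \<open>vis\<close>:
  the marginals of any coupling bound the difference of the images, and if the images agree the
  fibrewise product coupling has cost 0. Hence \<open>D_w\<close> vanishes exactly on pairs of resolutions
  with equal weak trace probabilities. Finally, image-finiteness and the bounded length of
  computations leave only finitely many trace distributions of resolutions, so the infima and
  suprema of the Hausdorff lifting are attained.\<close>

section \<open>Computations of deterministic systems\<close>

definition max_comps :: "('z, 'a) trans \<Rightarrow> 'z \<Rightarrow> ('z, 'a) comp set" where
  "max_comps R z = {c. maximal_comp R z c}"

definition comps_bounded :: "('z, 'a) trans \<Rightarrow> 'z \<Rightarrow> nat \<Rightarrow> bool" where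
  "comps_bounded R z n \<longleftrightarrow> (\<forall>c\<in>comps R z. length c \<le> n)"

lemma comp_prob_Cons [simp]: "comp_prob ((a, \<pi>, z') # d) = pmf \<pi> z' * comp_prob d"
  by (simp add: comp_prob_def)

lemma comp_prob_nonneg: "comp_prob c \<ge> 0"
  unfolding comp_prob_def by (induction c) auto

lemma comps_prob_nonneg: "comps_prob C \<ge> 0"
  unfolding comps_prob_def by (rule sum_nonneg) (rule comp_prob_nonneg)

lemma tr_Nil [simp]: "tr [] = []"
  by (simp add: tr_def)

lemma tr_Cons [simp]: "tr ((a, \<pi>, z') # d) = a # tr d"
  by (simp add: tr_def)

lemma sum_Cons_Sigma:
  assumes "finite S" "\<And>z'. z' \<in> S \<Longrightarrow> finite (D z')"
  shows "sum g {(a, \<pi>, z') # d | z' d. z' \<in> S \<and> d \<in> D z'} =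
         (\<Sum>z'\<in>S. \<Sum>d\<in>D z'. g ((a, \<pi>, z') # d))"
proof -
  have "{(a, \<pi>, z') # d | z' d. z' \<in> S \<and> d \<in> D z'} = (\<lambda>(z', d). (a, \<pi>, z') # d) ` Sigma S D"
    by auto
  moreover have "inj_on (\<lambda>(z', d). (a, \<pi>, z') # d) (Sigma S D)"
    by (auto simp: inj_on_def)
  ultimately show ?thesis
    using assms by (simp add: sum.reindex sum.Sigma split_def)
qed

locale deterministic_pts =
  fixes R :: "('z, 'a) trans"
  assumes finite_support: "\<And>z a \<pi>. (z, a, \<pi>) \<in> R \<Longrightarrow> finite (set_pmf \<pi>)"
    and deterministic: "\<And>z a1 \<pi>1 a2 \<pi>2. (z, a1, \<pi>1) \<in> R \<Longrightarrow> (z, a2, \<pi>2) \<in> R \<Longrightarrow> a1 = a2 \<and> \<pi>1 = \<pi>2"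
begin

lemma comps_no_trans:
  assumes "\<And>a \<pi>. (z, a, \<pi>) \<notin> R"
  shows "comps R z = {[]}"
proof -
  have "valid_comp R z c \<longleftrightarrow> c = []" for c
    using assms by (cases c) auto
  thus ?thesis by (auto simp: comps_def)
qed

lemma Cons_in_comps_iff:
  assumes "(z, a, \<pi>) \<in> R"
  shows "x # d \<in> comps R z \<longleftrightarrow> (\<exists>z'. x = (a, \<pi>, z') \<and> z' \<in> set_pmf \<pi> \<and> d \<in> comps R z')"
proof -
  obtain b \<sigma> z' where x: "x = (b, \<sigma>, z')" by (cases x) auto
  have "(z, b, \<sigma>) \<in> R \<Longrightarrow> b = a \<and> \<sigma> = \<pi>" using deterministic assms by blast
  thus ?thesis using assms by (auto simp: x comps_def)
qed

lemma comps_trans: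
  assumes "(z, a, \<pi>) \<in> R"
  shows "comps R z = {[]} \<union> {(a, \<pi>, z') # d | z' d. z' \<in> set_pmf \<pi> \<and> d \<in> comps R z'}"
proof -
  have "c \<in> comps R z \<longleftrightarrow> c = [] \<or> (\<exists>z' d. c = (a, \<pi>, z') # d \<and> z' \<in> set_pmf \<pi> \<and> d \<in> comps R z')" for c
    using Cons_in_comps_iff[OF assms] by (cases c) (auto simp: comps_def)
  thus ?thesis by blast
qed

lemma singleton_in_comps:
  assumes "(z, a, \<pi>) \<in> R"
  obtains z' where "z' \<in> set_pmf \<pi>" "[(a, \<pi>, z')] \<in> comps R z"
  using assms set_pmf_not_empty[of \<pi>] by (fastforce simp: comps_def)

lemma max_comps_no_trans:
  assumes "\<And>a \<pi>. (z, a, \<pi>) \<notin> R"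
  shows "max_comps R z = {[]}"
  using comps_no_trans[OF assms] by (auto simp: max_comps_def maximal_comp_def)

lemma max_comps_trans:
  assumes tr: "(z, a, \<pi>) \<in> R"
  shows "max_comps R z = {(a, \<pi>, z') # d | z' d. z' \<in> set_pmf \<pi> \<and> d \<in> max_comps R z'}"
proof (intro set_eqI iffI)
  fix c assume c: "c \<in> max_comps R z"
  obtain z0 where "[(a, \<pi>, z0)] \<in> comps R z" using singleton_in_comps[OF tr] .
  hence "c \<noteq> []" using c by (auto simp: max_comps_def maximal_comp_def)
  with c comps_trans[OF tr] obtain z' d where cd: "c = (a, \<pi>, z') # d" "z' \<in> set_pmf \<pi>" "d \<in> comps R z'"
    by (auto simp: max_comps_def maximal_comp_def)
  have "\<not> strict_prefix d d'" if "d' \<in> comps R z'" for d'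
  proof
    assume "strict_prefix d d'"
    hence "(a, \<pi>, z') # d' \<in> comps R z" "strict_prefix c ((a, \<pi>, z') # d')"
      using comps_trans[OF tr] cd that by auto
    thus False using c by (auto simp: max_comps_def maximal_comp_def)
  qed
  thus "c \<in> {(a, \<pi>, z') # d | z' d. z' \<in> set_pmf \<pi> \<and> d \<in> max_comps R z'}"
    using cd by (auto simp: max_comps_def maximal_comp_def)
next
  fix c assume "c \<in> {(a, \<pi>, z') # d | z' d. z' \<in> set_pmf \<pi> \<and> d \<in> max_comps R z'}"
  then obtain z' d where cd: "c = (a, \<pi>, z') # d" "z' \<in> set_pmf \<pi>" "d \<in> max_comps R z'" by auto
  have "\<not> strict_prefix c c'" if c': "c' \<in> comps R z" for c'
  proof
    assume "strict_prefix c c'"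
    then obtain d' where "c' = (a, \<pi>, z') # d'" "strict_prefix d d'"
      using cd by (cases c') auto
    moreover from this have "d' \<in> comps R z'" using c' Cons_in_comps_iff[OF tr] by auto
    ultimately show False using cd by (auto simp: max_comps_def maximal_comp_def)
  qed
  moreover have "c \<in> comps R z" using cd comps_trans[OF tr] by (auto simp: max_comps_def maximal_comp_def)
  ultimately show "c \<in> max_comps R z" by (auto simp: max_comps_def maximal_comp_def)
qed

lemma comps_bounded_0_no_trans:
  assumes "comps_bounded R z 0"
  shows "(z, a, \<pi>) \<notin> R"
proof
  assume "(z, a, \<pi>) \<in> R"
  then obtain z0 where "[(a, \<pi>, z0)] \<in> comps R z" by (rule singleton_in_comps)
  thus False using assms by (auto simp: comps_bounded_def)
qed

lemma comps_bounded_Suc: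
  assumes "comps_bounded R z (Suc n)" "(z, a, \<pi>) \<in> R" "z' \<in> set_pmf \<pi>"
  shows "comps_bounded R z' n"
  unfolding comps_bounded_def
proof
  fix d assume "d \<in> comps R z'"
  hence "(a, \<pi>, z') # d \<in> comps R z" using comps_trans[OF assms(2)] assms(3) by auto
  thus "length d \<le> n" using assms(1) by (auto simp: comps_bounded_def)
qed

lemma finite_comps: "comps_bounded R z n \<Longrightarrow> finite (comps R z)"
proof (induction n arbitrary: z)
  case 0
  thus ?case using comps_no_trans comps_bounded_0_no_trans by (metis finite.simps)
next
  case (Suc n)
  show ?case
  proof (cases "\<exists>a \<pi>. (z, a, \<pi>) \<in> R")
    case True
    then obtain a \<pi> where tr: "(z, a, \<pi>) \<in> R" by auto
    have "{(a, \<pi>, z') # d | z' d. z' \<in> set_pmf \<pi> \<and> d \<in> comps R z'} =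
        (\<lambda>(z', d). (a, \<pi>, z') # d) ` Sigma (set_pmf \<pi>) (comps R)"
      by auto
    moreover have "finite (Sigma (set_pmf \<pi>) (comps R))"
      using finite_support[OF tr] Suc.IH comps_bounded_Suc[OF Suc.prems tr] by auto
    ultimately show ?thesis unfolding comps_trans[OF tr] by simp
  next
    case False
    thus ?thesis using comps_no_trans by (metis finite.simps)
  qed
qed

lemma finite_max_comps: "comps_bounded R z n \<Longrightarrow> finite (max_comps R z)"
  by (rule finite_subset[OF _ finite_comps]) (auto simp: max_comps_def maximal_comp_def)

lemma comps_prob_max_comps_trans:
  assumes tr: "(z, a, \<pi>) \<in> R" and bounded: "comps_bounded R z (Suc n)"
  shows "comps_prob {c \<in> max_comps R z. P c} =
     (\<Sum>z'\<in>set_pmf \<pi>. pmf \<pi> z' * comps_prob {d \<in> max_comps R z'. P ((a, \<pi>, z') # d)})"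
proof -
  define D where "D z' = {d \<in> max_comps R z'. P ((a, \<pi>, z') # d)}" for z'
  have "{c \<in> max_comps R z. P c} = {(a, \<pi>, z') # d | z' d. z' \<in> set_pmf \<pi> \<and> d \<in> D z'}"
    by (subst max_comps_trans[OF tr]) (auto simp: D_def)
  moreover have "finite (D z')" if "z' \<in> set_pmf \<pi>" for z'
    using finite_max_comps[OF comps_bounded_Suc[OF bounded tr that]] by (simp add: D_def)
  ultimately show ?thesis unfolding comps_prob_def D_def[symmetric]
    by (simp add: sum_Cons_Sigma[OF finite_support[OF tr]] sum_distrib_left)
qed

lemma comps_prob_max_comps: "comps_bounded R z n \<Longrightarrow> comps_prob (max_comps R z) = 1"
proof (induction n arbitrary: z)
  case 0
  have "max_comps R z = {[]}"
    by (rule max_comps_no_trans) (rule comps_bounded_0_no_trans[OF 0])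
  thus ?case by (simp add: comps_prob_def comp_prob_def)
next
  case (Suc n)
  show ?case
  proof (cases "\<exists>a \<pi>. (z, a, \<pi>) \<in> R")
    case True
    then obtain a \<pi> where tr: "(z, a, \<pi>) \<in> R" by auto
    have "comps_prob (max_comps R z) = comps_prob {c \<in> max_comps R z. True}" by simp
    also have "\<dots> = (\<Sum>z'\<in>set_pmf \<pi>. pmf \<pi> z' * comps_prob {d \<in> max_comps R z'. True})"
      by (rule comps_prob_max_comps_trans[OF tr Suc.prems])
    also have "\<dots> = (\<Sum>z'\<in>set_pmf \<pi>. pmf \<pi> z')"
      using Suc.IH comps_bounded_Suc[OF Suc.prems tr] by simp
    also have "\<dots> = 1" by (rule sum_pmf_eq_1) (use finite_support[OF tr] in auto)
    finally show ?thesis .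
  next
    case False
    hence "max_comps R z = {[]}" by (intro max_comps_no_trans) blast
    thus ?thesis by (simp add: comps_prob_def comp_prob_def)
  qed
qed

end

section \<open>Weak computations of deterministic systems\<close>

fun vis_act :: "'a act \<Rightarrow> 'a list" where
  "vis_act Tau = []"
| "vis_act (Act x) = [x]"

lemma vis_Cons: "vis (a # w) = vis_act a @ vis w"
  by (cases a) auto

definition vis_prefix_prob :: "('z, 'a) trans \<Rightarrow> 'z \<Rightarrow> 'a list \<Rightarrow> real" where
  "vis_prefix_prob R z \<beta> = comps_prob {c \<in> max_comps R z. prefix \<beta> (vis (tr c))}"

context deterministic_pts
begin

lemma Cw_no_trans:
  assumes "\<And>a \<pi>. (z, a, \<pi>) \<notin> R"
  shows "Cw R z \<beta> = (if \<beta> = [] then {[]} else {})"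
  unfolding Cw_def comps_no_trans[OF assms] by (cases \<beta>) auto

lemma Nil_in_Cw_iff:
  assumes tr: "(z, a, \<pi>) \<in> R"
  shows "[] \<in> Cw R z \<beta> \<longleftrightarrow> \<beta> = [] \<and> a \<noteq> Tau"
proof (cases "a = Tau")
  case True
  obtain z0 where "[(a, \<pi>, z0)] \<in> comps R z" using singleton_in_comps[OF tr] .
  thus ?thesis using True unfolding Cw_def by force
next
  case False
  have "vis (tr c') \<noteq> []" if "c' \<in> comps R z" "c' \<noteq> []" for c'
    using that False Cons_in_comps_iff[OF tr] by (cases c'; cases a) auto
  moreover have "[] \<in> comps R z" by (simp add: comps_def)
  ultimately show ?thesis using False unfolding Cw_def by auto
qed

lemma Cons_in_Cw_iff:
  assumes tr: "(z, a, \<pi>) \<in> R"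
  shows "(a, \<pi>, z') # d \<in> Cw R z \<beta> \<longleftrightarrow>
    z' \<in> set_pmf \<pi> \<and> (\<exists>\<beta>'. \<beta> = vis_act a @ \<beta>' \<and> d \<in> Cw R z' \<beta>')"
proof (cases "z' \<in> set_pmf \<pi>")
  case True
  have extension: "c' \<in> comps R z \<and> strict_prefix ((a, \<pi>, z') # d) c' \<longleftrightarrow>
      (\<exists>d'. c' = (a, \<pi>, z') # d' \<and> d' \<in> comps R z' \<and> strict_prefix d d')" for c'
    using True Cons_in_comps_iff[OF tr] by (cases c') auto
  have no_extension: "(\<exists>c'\<in>comps R z. vis (tr c') = \<beta> \<and> strict_prefix ((a, \<pi>, z') # d) c') \<longleftrightarrow>
      (\<exists>d'\<in>comps R z'. vis_act a @ vis (tr d') = \<beta> \<and> strict_prefix d d')"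
  proof
    assume "\<exists>c'\<in>comps R z. vis (tr c') = \<beta> \<and> strict_prefix ((a, \<pi>, z') # d) c'"
    then obtain c' where c': "c' \<in> comps R z" "vis (tr c') = \<beta>" "strict_prefix ((a, \<pi>, z') # d) c'"
      by blast
    with extension obtain d' where "c' = (a, \<pi>, z') # d'" "d' \<in> comps R z'" "strict_prefix d d'"
      by blast
    thus "\<exists>d'\<in>comps R z'. vis_act a @ vis (tr d') = \<beta> \<and> strict_prefix d d'"
      using c'(2) by (auto simp: vis_Cons)
  next
    assume "\<exists>d'\<in>comps R z'. vis_act a @ vis (tr d') = \<beta> \<and> strict_prefix d d'"
    then obtain d' where d': "d' \<in> comps R z'" "vis_act a @ vis (tr d') = \<beta>" "strict_prefix d d'"
      by blast
    hence "(a, \<pi>, z') # d' \<in> comps R z" "strict_prefix ((a, \<pi>, z') # d) ((a, \<pi>, z') # d')"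
      using extension by blast+
    thus "\<exists>c'\<in>comps R z. vis (tr c') = \<beta> \<and> strict_prefix ((a, \<pi>, z') # d) c'"
      using d'(2) by (auto simp: vis_Cons intro!: bexI[of _ "(a, \<pi>, z') # d'"])
  qed
  have "(a, \<pi>, z') # d \<in> Cw R z \<beta> \<longleftrightarrow> d \<in> comps R z' \<and> vis_act a @ vis (tr d) = \<beta> \<and>
      \<not> (\<exists>d'\<in>comps R z'. vis_act a @ vis (tr d') = \<beta> \<and> strict_prefix d d')"
    unfolding no_extension[symmetric] using True Cons_in_comps_iff[OF tr]
    by (simp add: Cw_def vis_Cons)
  also have "\<dots> \<longleftrightarrow> (\<exists>\<beta>'. \<beta> = vis_act a @ \<beta>' \<and> d \<in> Cw R z' \<beta>')"
    by (auto simp: Cw_def)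
  finally show ?thesis using True by simp
next
  case False
  thus ?thesis using Cons_in_comps_iff[OF tr] by (auto simp: Cw_def)
qed

lemma Cw_trans:
  assumes tr: "(z, a, \<pi>) \<in> R"
  shows "Cw R z \<beta> = (if \<beta> = [] \<and> a \<noteq> Tau then {[]} else {}) \<union>
     {(a, \<pi>, z') # d | z' d. z' \<in> set_pmf \<pi> \<and> d \<in> {d. \<exists>\<beta>'. \<beta> = vis_act a @ \<beta>' \<and> d \<in> Cw R z' \<beta>'}}"
proof (intro set_eqI)
  fix c
  show "c \<in> Cw R z \<beta> \<longleftrightarrow> c \<in> (if \<beta> = [] \<and> a \<noteq> Tau then {[]} else {}) \<union>
     {(a, \<pi>, z') # d | z' d. z' \<in> set_pmf \<pi> \<and> d \<in> {d. \<exists>\<beta>'. \<beta> = vis_act a @ \<beta>' \<and> d \<in> Cw R z' \<beta>'}}"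
  proof (cases c)
    case Nil
    thus ?thesis using Nil_in_Cw_iff[OF tr] by auto
  next
    case (Cons x d)
    show ?thesis
    proof
      assume c: "c \<in> Cw R z \<beta>"
      then obtain z' where "x = (a, \<pi>, z')"
        using Cons_in_comps_iff[OF tr] by (auto simp: Cw_def Cons)
      thus "c \<in> (if \<beta> = [] \<and> a \<noteq> Tau then {[]} else {}) \<union>
         {(a, \<pi>, z') # d | z' d. z' \<in> set_pmf \<pi> \<and> d \<in> {d. \<exists>\<beta>'. \<beta> = vis_act a @ \<beta>' \<and> d \<in> Cw R z' \<beta>'}}"
        using c Cons_in_Cw_iff[OF tr] Cons by auto
    next
      assume "c \<in> (if \<beta> = [] \<and> a \<noteq> Tau then {[]} else {}) \<union>
         {(a, \<pi>, z') # d | z' d. z' \<in> set_pmf \<pi> \<and> d \<in> {d. \<exists>\<beta>'. \<beta> = vis_act a @ \<beta>' \<and> d \<in> Cw R z' \<beta>'}}"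
      thus "c \<in> Cw R z \<beta>" using Cons_in_Cw_iff[OF tr] Cons by (auto split: if_splits)
    qed
  qed
qed

lemma comps_prob_Cw_trans:
  assumes tr: "(z, a, \<pi>) \<in> R" and bounded: "comps_bounded R z (Suc n)"
    and succ: "\<And>z' \<beta>. z' \<in> set_pmf \<pi> \<Longrightarrow> comps_prob (Cw R z' \<beta>) = vis_prefix_prob R z' \<beta>"
  shows "comps_prob (Cw R z \<beta>) = vis_prefix_prob R z \<beta>"
proof -
  define D where "D z' = {d. \<exists>\<beta>'. \<beta> = vis_act a @ \<beta>' \<and> d \<in> Cw R z' \<beta>'}" for z'
  have finite_D: "finite (D z')" if "z' \<in> set_pmf \<pi>" for z'
    by (rule finite_subset[OF _ finite_comps[OF comps_bounded_Suc[OF bounded tr that]]])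
      (auto simp: D_def Cw_def)
  have "finite {(a, \<pi>, z') # d | z' d. z' \<in> set_pmf \<pi> \<and> d \<in> D z'}"
  proof -
    have "{(a, \<pi>, z') # d | z' d. z' \<in> set_pmf \<pi> \<and> d \<in> D z'} =
        (\<lambda>(z', d). (a, \<pi>, z') # d) ` Sigma (set_pmf \<pi>) D"
      by auto
    thus ?thesis using finite_support[OF tr] finite_D by auto
  qed
  hence lhs: "comps_prob (Cw R z \<beta>) = (if \<beta> = [] \<and> a \<noteq> Tau then 1 else 0) +
      (\<Sum>z'\<in>set_pmf \<pi>. pmf \<pi> z' * comps_prob (D z'))"
    unfolding Cw_trans[OF tr] D_def[symmetric] comps_prob_def
    by (subst sum.union_disjoint)
      (auto simp: sum_Cons_Sigma[OF finite_support[OF tr] finite_D] sum_distrib_left comp_prob_def)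
  have rhs: "vis_prefix_prob R z \<beta> = (\<Sum>z'\<in>set_pmf \<pi>. pmf \<pi> z' *
      comps_prob {d \<in> max_comps R z'. prefix \<beta> (vis_act a @ vis (tr d))})"
    unfolding vis_prefix_prob_def comps_prob_max_comps_trans[OF tr bounded] by (simp add: vis_Cons)
  have total: "(\<Sum>z'\<in>set_pmf \<pi>. pmf \<pi> z') = 1"
    by (rule sum_pmf_eq_1) (use finite_support[OF tr] in auto)
  show ?thesis
  proof (cases a)
    case Tau
    have "D z' = Cw R z' \<beta>" for z' by (simp add: D_def Tau)
    thus ?thesis unfolding lhs rhs using succ by (simp add: Tau vis_prefix_prob_def)
  next
    case (Act x)
    show ?thesis
    proof (cases \<beta>)
      case Nil
      have "D z' = {}" for z' by (simp add: D_def Act Nil)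
      thus ?thesis unfolding lhs rhs
        using total comps_prob_max_comps[OF comps_bounded_Suc[OF bounded tr]]
        by (simp add: Act Nil comps_prob_def)
    next
      case (Cons y \<beta>')
      have "D z' = (if y = x then Cw R z' \<beta>' else {})" for z' by (auto simp: D_def Act Cons)
      thus ?thesis unfolding lhs rhs using succ
        by (auto simp: Act Cons vis_prefix_prob_def comps_prob_def intro!: sum.cong)
    qed
  qed
qed

lemma comps_prob_Cw: "comps_bounded R z n \<Longrightarrow> comps_prob (Cw R z \<beta>) = vis_prefix_prob R z \<beta>"
proof (induction n arbitrary: z \<beta>)
  case 0
  hence "\<And>a \<pi>. (z, a, \<pi>) \<notin> R" by (rule comps_bounded_0_no_trans)
  thus ?case
    by (simp add: Cw_no_trans max_comps_no_trans vis_prefix_prob_def comps_prob_def comp_prob_def)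
next
  case (Suc n)
  show ?case
  proof (cases "\<exists>a \<pi>. (z, a, \<pi>) \<in> R")
    case True
    then obtain a \<pi> where tr: "(z, a, \<pi>) \<in> R" by auto
    show ?thesis
      by (rule comps_prob_Cw_trans[OF tr Suc.prems Suc.IH[OF comps_bounded_Suc[OF Suc.prems tr]]])
  next
    case False
    hence "\<And>a \<pi>. (z, a, \<pi>) \<notin> R" by blast
    thus ?thesis
      by (simp add: Cw_no_trans max_comps_no_trans vis_prefix_prob_def comps_prob_def comp_prob_def)
  qed
qed

end

section \<open>Inverting sums over prefixes\<close>

lemma prefix_snoc_iff: "prefix (\<beta> @ [a]) \<gamma> \<longleftrightarrow> strict_prefix \<beta> \<gamma> \<and> a = \<gamma> ! length \<beta>"
proof
  assume "prefix (\<beta> @ [a]) \<gamma>"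
  then obtain r where "\<gamma> = \<beta> @ a # r" by (auto elim!: prefixE)
  thus "strict_prefix \<beta> \<gamma> \<and> a = \<gamma> ! length \<beta>" by (auto intro: strict_prefixI')
next
  assume "strict_prefix \<beta> \<gamma> \<and> a = \<gamma> ! length \<beta>"
  then obtain x r where "\<gamma> = \<beta> @ x # r" "a = \<gamma> ! length \<beta>" by (auto elim!: strict_prefixE')
  thus "prefix (\<beta> @ [a]) \<gamma>" by auto
qed

lemma sum_strict_prefix_eq_sum_snoc:
  fixes V :: "'x list \<Rightarrow> 'b::comm_monoid_add"
  assumes S: "finite S" and L: "finite L" and SL: "\<And>\<gamma>. \<gamma> \<in> S \<Longrightarrow> set \<gamma> \<subseteq> L"
  shows "(\<Sum>\<gamma>\<in>{\<gamma>\<in>S. strict_prefix \<beta> \<gamma>}. V \<gamma>) = (\<Sum>a\<in>L. \<Sum>\<gamma>\<in>{\<gamma>\<in>S. prefix (\<beta> @ [a]) \<gamma>}. V \<gamma>)"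
proof -
  have "(\<Sum>a\<in>L. \<Sum>\<gamma>\<in>{\<gamma>\<in>S. prefix (\<beta> @ [a]) \<gamma>}. V \<gamma>) =
        (\<Sum>\<gamma>\<in>S. \<Sum>a\<in>{a\<in>L. prefix (\<beta> @ [a]) \<gamma>}. V \<gamma>)"
    using sum.swap_restrict[OF L S, of "\<lambda>a \<gamma>. V \<gamma>" "\<lambda>a \<gamma>. prefix (\<beta> @ [a]) \<gamma>"] by simp
  also have "\<dots> = (\<Sum>\<gamma>\<in>S. if strict_prefix \<beta> \<gamma> then V \<gamma> else 0)"
  proof (rule sum.cong[OF refl])
    fix \<gamma> assume "\<gamma> \<in> S"
    have "{a\<in>L. prefix (\<beta> @ [a]) \<gamma>} = (if strict_prefix \<beta> \<gamma> then {\<gamma> ! length \<beta>} else {})"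
      using SL[OF \<open>\<gamma> \<in> S\<close>] prefix_length_less[of \<beta> \<gamma>] by (auto simp: prefix_snoc_iff)
    thus "(\<Sum>a\<in>{a\<in>L. prefix (\<beta> @ [a]) \<gamma>}. V \<gamma>) = (if strict_prefix \<beta> \<gamma> then V \<gamma> else 0)"
      by simp
  qed
  also have "\<dots> = (\<Sum>\<gamma>\<in>{\<gamma>\<in>S. strict_prefix \<beta> \<gamma>}. V \<gamma>)"
    by (simp add: sum.inter_filter[OF S])
  finally show ?thesis by simp
qed

lemma sum_prefix_inversion:
  fixes V :: "'x list \<Rightarrow> 'b::ab_group_add"
  assumes S: "finite S" and L: "finite L" and SL: "\<And>\<gamma>. \<gamma> \<in> S \<Longrightarrow> set \<gamma> \<subseteq> L"
  shows "(if \<beta> \<in> S then V \<beta> else 0) =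
     (\<Sum>\<gamma>\<in>{\<gamma>\<in>S. prefix \<beta> \<gamma>}. V \<gamma>) - (\<Sum>a\<in>L. \<Sum>\<gamma>\<in>{\<gamma>\<in>S. prefix (\<beta> @ [a]) \<gamma>}. V \<gamma>)"
proof -
  have "{\<gamma>\<in>S. prefix \<beta> \<gamma>} = {\<gamma>\<in>S. \<gamma> = \<beta>} \<union> {\<gamma>\<in>S. strict_prefix \<beta> \<gamma>}"
    by (auto simp: strict_prefix_def)
  hence "(\<Sum>\<gamma>\<in>{\<gamma>\<in>S. prefix \<beta> \<gamma>}. V \<gamma>) =
      (\<Sum>\<gamma>\<in>{\<gamma>\<in>S. \<gamma> = \<beta>}. V \<gamma>) + (\<Sum>\<gamma>\<in>{\<gamma>\<in>S. strict_prefix \<beta> \<gamma>}. V \<gamma>)"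
    by (simp only:) (rule sum.union_disjoint; use S in auto)
  moreover have "{\<gamma>\<in>S. \<gamma> = \<beta>} = (if \<beta> \<in> S then {\<beta>} else {})" by auto
  ultimately show ?thesis
    by (simp add: sum_strict_prefix_eq_sum_snoc[OF S L SL])
qed

section \<open>Kantorovich lifting of the kernel of a map\<close>

definition cost :: "('x \<Rightarrow> 'x \<Rightarrow> real) \<Rightarrow> ('x \<times> 'x \<Rightarrow> real) \<Rightarrow> real" where
  "cost d \<omega> = (\<Sum>p\<in>{p. \<omega> p \<noteq> 0}. \<omega> p * d (fst p) (snd p))"

lemma kantorovich_eq_Inf_cost: "kantorovich d \<mu> \<nu> = Inf {cost d \<omega> | \<omega>. is_coupling \<mu> \<nu> \<omega>}"
  by (simp add: kantorovich_def cost_def)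

lemma sum_nonzero_eq:
  fixes g :: "'x \<Rightarrow> real"
  assumes "finite S" "{y. g y \<noteq> 0} \<subseteq> S"
  shows "sum g {y. g y \<noteq> 0} = sum g S"
  by (rule sum.mono_neutral_left) (use assms in auto)

lemma is_coupling_swap: "is_coupling \<mu> \<nu> \<omega> \<Longrightarrow> is_coupling \<nu> \<mu> (\<omega> \<circ> prod.swap)"
proof -
  assume c: "is_coupling \<mu> \<nu> \<omega>"
  have "{p. (\<omega> \<circ> prod.swap) p \<noteq> 0} = prod.swap ` {p. \<omega> p \<noteq> 0}" by force
  thus ?thesis using c by (simp add: is_coupling_def)
qed

lemma coupling_marginal_fst:
  fixes \<mu> :: "'x \<Rightarrow> real"
  assumes c: "is_coupling \<mu> \<nu> \<omega>" and S: "finite S" "\<And>x. x \<notin> S \<Longrightarrow> \<mu> x = 0"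
  shows "(\<Sum>x\<in>{x\<in>S. P x}. \<mu> x) = (\<Sum>p\<in>{p. \<omega> p \<noteq> 0 \<and> P (fst p)}. \<omega> p)"
proof -
  have W: "finite {p. \<omega> p \<noteq> 0}" and nonneg: "\<And>p. \<omega> p \<ge> 0"
    and marginal: "\<And>x. (\<Sum>y\<in>{y. \<omega> (x, y) \<noteq> 0}. \<omega> (x, y)) = \<mu> x"
    using c by (auto simp: is_coupling_def)
  have fibre: "finite {y. \<omega> (x, y) \<noteq> 0}" for x
    by (rule finite_subset[of _ "snd ` {p. \<omega> p \<noteq> 0}"]) (use W in force)+
  have in_S: "fst p \<in> S" if "\<omega> p \<noteq> 0" for p
  proof (rule ccontr)
    assume "fst p \<notin> S"
    hence "\<mu> (fst p) = 0" using S by auto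
    moreover have "\<omega> p \<le> (\<Sum>y\<in>{y. \<omega> (fst p, y) \<noteq> 0}. \<omega> (fst p, y))"
      using member_le_sum[of "snd p" "{y. \<omega> (fst p, y) \<noteq> 0}" "\<lambda>y. \<omega> (fst p, y)"] that nonneg fibre
      by (cases p) auto
    ultimately show False using marginal[of "fst p"] that nonneg[of p] by linarith
  qed
  have "(\<Sum>x\<in>{x\<in>S. P x}. \<mu> x) = (\<Sum>x\<in>{x\<in>S. P x}. \<Sum>y\<in>{y. \<omega> (x, y) \<noteq> 0}. \<omega> (x, y))"
    by (simp add: marginal)
  also have "\<dots> = (\<Sum>p\<in>Sigma {x\<in>S. P x} (\<lambda>x. {y. \<omega> (x, y) \<noteq> 0}). \<omega> p)"
    by (subst sum.Sigma) (use S fibre in auto)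
  also have "Sigma {x\<in>S. P x} (\<lambda>x. {y. \<omega> (x, y) \<noteq> 0}) = {p. \<omega> p \<noteq> 0 \<and> P (fst p)}"
    using in_S by force
  finally show ?thesis .
qed

lemma coupling_marginal_snd:
  fixes \<nu> :: "'x \<Rightarrow> real"
  assumes c: "is_coupling \<mu> \<nu> \<omega>" and S: "finite S" "\<And>x. x \<notin> S \<Longrightarrow> \<nu> x = 0"
  shows "(\<Sum>x\<in>{x\<in>S. P x}. \<nu> x) = (\<Sum>p\<in>{p. \<omega> p \<noteq> 0 \<and> P (snd p)}. \<omega> p)"
proof -
  have "(\<Sum>x\<in>{x\<in>S. P x}. \<nu> x) = (\<Sum>p\<in>{p. \<omega> (prod.swap p) \<noteq> 0 \<and> P (fst p)}. \<omega> (prod.swap p))"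
    using coupling_marginal_fst[OF is_coupling_swap[OF c] S] by simp
  also have "{p. \<omega> (prod.swap p) \<noteq> 0 \<and> P (fst p)} = prod.swap ` {p. \<omega> p \<noteq> 0 \<and> P (snd p)}"
    by force
  finally show ?thesis by (simp add: sum.reindex)
qed

lemma cost_nonneg: "is_coupling \<mu> \<nu> \<omega> \<Longrightarrow> (\<And>x y. d x y \<ge> 0) \<Longrightarrow> cost d \<omega> \<ge> 0"
  unfolding cost_def is_coupling_def by (auto intro!: sum_nonneg)

lemma sum_coupling_diff_le_cost:
  assumes c: "is_coupling \<mu> \<nu> \<omega>" and d: "\<And>x y. d x y \<ge> 0"
    and PQ: "\<And>p. P p \<Longrightarrow> \<not> Q p \<Longrightarrow> d (fst p) (snd p) = 1"
  shows "(\<Sum>p\<in>{p. \<omega> p \<noteq> 0 \<and> P p}. \<omega> p) - (\<Sum>p\<in>{p. \<omega> p \<noteq> 0 \<and> Q p}. \<omega> p) \<le> cost d \<omega>"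
proof -
  let ?A = "{p. \<omega> p \<noteq> 0 \<and> P p \<and> Q p}" and ?B = "{p. \<omega> p \<noteq> 0 \<and> P p \<and> \<not> Q p}"
  have W: "finite {p. \<omega> p \<noteq> 0}" and nonneg: "\<And>p. \<omega> p \<ge> 0"
    using c by (auto simp: is_coupling_def)
  have fin: "finite ?A" "finite ?B" by (rule finite_subset[OF _ W], blast)+
  have "{p. \<omega> p \<noteq> 0 \<and> P p} = ?A \<union> ?B" by blast
  hence "(\<Sum>p\<in>{p. \<omega> p \<noteq> 0 \<and> P p}. \<omega> p) = sum \<omega> ?A + sum \<omega> ?B"
    by (simp only:) (rule sum.union_disjoint; use fin in auto)
  moreover have "sum \<omega> ?A \<le> (\<Sum>p\<in>{p. \<omega> p \<noteq> 0 \<and> Q p}. \<omega> p)"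
    by (rule sum_mono2) (use W nonneg in \<open>auto intro: finite_subset\<close>)
  moreover have "sum \<omega> ?B = (\<Sum>p\<in>?B. \<omega> p * d (fst p) (snd p))"
    by (rule sum.cong) (auto simp: PQ)
  moreover have "(\<Sum>p\<in>?B. \<omega> p * d (fst p) (snd p)) \<le> cost d \<omega>"
    unfolding cost_def by (rule sum_mono2) (use W nonneg d in auto)
  ultimately show ?thesis by linarith
qed

definition fibre_dist :: "('x \<Rightarrow> 'y) \<Rightarrow> 'x \<Rightarrow> 'x \<Rightarrow> real" where
  "fibre_dist \<phi> x y = (if \<phi> x = \<phi> y then 0 else 1)"

definition push_mass :: "('x \<Rightarrow> 'y) \<Rightarrow> ('x \<Rightarrow> real) \<Rightarrow> 'x set \<Rightarrow> 'y \<Rightarrow> real" where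
  "push_mass \<phi> \<mu> S y = (\<Sum>x\<in>{x\<in>S. \<phi> x = y}. \<mu> x)"

lemma fibre_dist_nonneg: "fibre_dist \<phi> x y \<ge> 0"
  by (simp add: fibre_dist_def)

lemma push_mass_nonneg: "(\<And>x. \<mu> x \<ge> 0) \<Longrightarrow> push_mass \<phi> \<mu> S y \<ge> 0"
  unfolding push_mass_def by (rule sum_nonneg)

locale distribution_pair =
  fixes \<mu> \<nu> :: "'x \<Rightarrow> real" and S\<^sub>\<mu> S\<^sub>\<nu> :: "'x set"
  assumes finite_supports: "finite S\<^sub>\<mu>" "finite S\<^sub>\<nu>"
    and outside_supports: "\<And>x. x \<notin> S\<^sub>\<mu> \<Longrightarrow> \<mu> x = 0" "\<And>x. x \<notin> S\<^sub>\<nu> \<Longrightarrow> \<nu> x = 0"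
    and nonneg: "\<And>x. \<mu> x \<ge> 0" "\<And>x. \<nu> x \<ge> 0"
    and total: "sum \<mu> S\<^sub>\<mu> = 1" "sum \<nu> S\<^sub>\<nu> = 1"
begin

lemma is_coupling_product: "is_coupling \<mu> \<nu> (\<lambda>p. \<mu> (fst p) * \<nu> (snd p))"
proof -
  have "finite {p. \<mu> (fst p) * \<nu> (snd p) \<noteq> 0}"
    by (rule finite_subset[of _ "S\<^sub>\<mu> \<times> S\<^sub>\<nu>"]) (use finite_supports outside_supports in fastforce)+
  moreover have "(\<Sum>y\<in>{y. \<mu> x * \<nu> y \<noteq> 0}. \<mu> x * \<nu> y) = \<mu> x" for x
    using sum_nonzero_eq[where g="\<lambda>y. \<mu> x * \<nu> y" and S=S\<^sub>\<nu>] finite_supports outside_supports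
    by (auto simp: sum_distrib_left[symmetric] total)
  moreover have "(\<Sum>x\<in>{x. \<mu> x * \<nu> y \<noteq> 0}. \<mu> x * \<nu> y) = \<nu> y" for y
    using sum_nonzero_eq[where g="\<lambda>x. \<mu> x * \<nu> y" and S=S\<^sub>\<mu>] finite_supports outside_supports
    by (auto simp: sum_distrib_right[symmetric] total)
  ultimately show ?thesis unfolding is_coupling_def using nonneg by simp
qed

lemma kantorovich_nonneg:
  assumes "\<And>x y. d x y \<ge> 0"
  shows "kantorovich d \<mu> \<nu> \<ge> 0"
  unfolding kantorovich_eq_Inf_cost
  by (rule cInf_greatest) (use is_coupling_product cost_nonneg[OF _ assms] in auto)

context
  fixes \<phi> :: "'x \<Rightarrow> 'y"
begin

lemma push_mass_diff_le_cost:
  assumes c: "is_coupling \<mu> \<nu> \<omega>"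
  shows "\<bar>push_mass \<phi> \<mu> S\<^sub>\<mu> y - push_mass \<phi> \<nu> S\<^sub>\<nu> y\<bar> \<le> cost (fibre_dist \<phi>) \<omega>"
proof -
  have "push_mass \<phi> \<mu> S\<^sub>\<mu> y = (\<Sum>p\<in>{p. \<omega> p \<noteq> 0 \<and> \<phi> (fst p) = y}. \<omega> p)"
    unfolding push_mass_def
    by (rule coupling_marginal_fst[OF c finite_supports(1) outside_supports(1)])
  moreover have "push_mass \<phi> \<nu> S\<^sub>\<nu> y = (\<Sum>p\<in>{p. \<omega> p \<noteq> 0 \<and> \<phi> (snd p) = y}. \<omega> p)"
    unfolding push_mass_def
    by (rule coupling_marginal_snd[OF c finite_supports(2) outside_supports(2)])
  moreover have "(\<Sum>p\<in>{p. \<omega> p \<noteq> 0 \<and> \<phi> (fst p) = y}. \<omega> p) -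
      (\<Sum>p\<in>{p. \<omega> p \<noteq> 0 \<and> \<phi> (snd p) = y}. \<omega> p) \<le> cost (fibre_dist \<phi>) \<omega>"
    "(\<Sum>p\<in>{p. \<omega> p \<noteq> 0 \<and> \<phi> (snd p) = y}. \<omega> p) -
      (\<Sum>p\<in>{p. \<omega> p \<noteq> 0 \<and> \<phi> (fst p) = y}. \<omega> p) \<le> cost (fibre_dist \<phi>) \<omega>"
    by (rule sum_coupling_diff_le_cost[OF c]; auto simp: fibre_dist_def)+
  ultimately show ?thesis by linarith
qed

lemma push_mass_eq_if_kantorovich_eq_0:
  assumes "kantorovich (fibre_dist \<phi>) \<mu> \<nu> = 0"
  shows "push_mass \<phi> \<mu> S\<^sub>\<mu> y = push_mass \<phi> \<nu> S\<^sub>\<nu> y"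
proof -
  have "{cost (fibre_dist \<phi>) \<omega> | \<omega>. is_coupling \<mu> \<nu> \<omega>} \<noteq> {}"
    using is_coupling_product by auto
  hence "\<bar>push_mass \<phi> \<mu> S\<^sub>\<mu> y - push_mass \<phi> \<nu> S\<^sub>\<nu> y\<bar> \<le> kantorovich (fibre_dist \<phi>) \<mu> \<nu>"
    unfolding kantorovich_eq_Inf_cost by (rule cInf_greatest) (use push_mass_diff_le_cost in blast)
  thus ?thesis using assms by linarith
qed

lemma le_push_mass_fst: "\<mu> x \<le> push_mass \<phi> \<mu> S\<^sub>\<mu> (\<phi> x)"
  using finite_supports outside_supports nonneg unfolding push_mass_def
  by (cases "x \<in> S\<^sub>\<mu>") (auto intro: member_le_sum sum_nonneg)

lemma le_push_mass_snd: "\<nu> x \<le> push_mass \<phi> \<nu> S\<^sub>\<nu> (\<phi> x)"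
  using finite_supports outside_supports nonneg unfolding push_mass_def
  by (cases "x \<in> S\<^sub>\<nu>") (auto intro: member_le_sum sum_nonneg)

definition fibre_coupling :: "'x \<times> 'x \<Rightarrow> real" where
  "fibre_coupling p = (let m = push_mass \<phi> \<mu> S\<^sub>\<mu> (\<phi> (fst p)) in
     if \<phi> (fst p) = \<phi> (snd p) \<and> m \<noteq> 0 then \<mu> (fst p) * \<nu> (snd p) / m else 0)"

context
  assumes push_mass_eq: "\<And>y. push_mass \<phi> \<mu> S\<^sub>\<mu> y = push_mass \<phi> \<nu> S\<^sub>\<nu> y"
begin

lemma fibre_coupling_marginal_fst:
  "(\<Sum>y\<in>{y. fibre_coupling (x, y) \<noteq> 0}. fibre_coupling (x, y)) = \<mu> x"
proof -
  let ?m = "push_mass \<phi> \<mu> S\<^sub>\<mu> (\<phi> x)"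
  have "(\<Sum>y\<in>{y. fibre_coupling (x, y) \<noteq> 0}. fibre_coupling (x, y)) = (\<Sum>y\<in>S\<^sub>\<nu>. fibre_coupling (x, y))"
    by (rule sum_nonzero_eq) (use finite_supports outside_supports in \<open>auto simp: fibre_coupling_def Let_def\<close>)
  also have "\<dots> = (\<Sum>y\<in>{y\<in>S\<^sub>\<nu>. \<phi> y = \<phi> x \<and> ?m \<noteq> 0}. \<mu> x * \<nu> y / ?m)"
    unfolding fibre_coupling_def Let_def
    by (subst sum.inter_filter[OF finite_supports(2), symmetric]) (auto intro!: sum.cong)
  also have "\<dots> = \<mu> x"
  proof (cases "?m = 0")
    case True
    thus ?thesis using le_push_mass_fst[of x] nonneg(1)[of x] by simp
  next
    case False
    hence "(\<Sum>y\<in>{y\<in>S\<^sub>\<nu>. \<phi> y = \<phi> x \<and> ?m \<noteq> 0}. \<mu> x * \<nu> y / ?m) =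
        \<mu> x * push_mass \<phi> \<nu> S\<^sub>\<nu> (\<phi> x) / ?m"
      by (simp add: push_mass_def sum_distrib_left sum_divide_distrib)
    thus ?thesis using False push_mass_eq[of "\<phi> x"] by simp
  qed
  finally show ?thesis .
qed

lemma fibre_coupling_marginal_snd:
  "(\<Sum>x\<in>{x. fibre_coupling (x, y) \<noteq> 0}. fibre_coupling (x, y)) = \<nu> y"
proof -
  let ?m = "push_mass \<phi> \<mu> S\<^sub>\<mu> (\<phi> y)"
  have "(\<Sum>x\<in>{x. fibre_coupling (x, y) \<noteq> 0}. fibre_coupling (x, y)) = (\<Sum>x\<in>S\<^sub>\<mu>. fibre_coupling (x, y))"
    by (rule sum_nonzero_eq) (use finite_supports outside_supports in \<open>auto simp: fibre_coupling_def Let_def\<close>)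
  also have "\<dots> = (\<Sum>x\<in>{x\<in>S\<^sub>\<mu>. \<phi> x = \<phi> y \<and> ?m \<noteq> 0}. \<mu> x * \<nu> y / ?m)"
    unfolding fibre_coupling_def Let_def
    by (subst sum.inter_filter[OF finite_supports(1), symmetric]) (auto intro!: sum.cong)
  also have "\<dots> = \<nu> y"
  proof (cases "?m = 0")
    case True
    thus ?thesis using le_push_mass_snd[of y] nonneg(2)[of y] push_mass_eq[of "\<phi> y"] by simp
  next
    case False
    hence "(\<Sum>x\<in>{x\<in>S\<^sub>\<mu>. \<phi> x = \<phi> y \<and> ?m \<noteq> 0}. \<mu> x * \<nu> y / ?m) = ?m * \<nu> y / ?m"
      by (simp add: push_mass_def sum_distrib_right sum_divide_distrib)
    thus ?thesis using False by simp
  qed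
  finally show ?thesis .
qed

lemma is_coupling_fibre_coupling: "is_coupling \<mu> \<nu> fibre_coupling"
proof -
  have "fibre_coupling p \<ge> 0" for p
    using nonneg push_mass_nonneg[of \<mu>, OF nonneg(1)] by (auto simp: fibre_coupling_def Let_def intro!: divide_nonneg_nonneg)
  moreover have "finite {p. fibre_coupling p \<noteq> 0}"
  proof (rule finite_subset)
    show "{p. fibre_coupling p \<noteq> 0} \<subseteq> S\<^sub>\<mu> \<times> S\<^sub>\<nu>"
    proof safe
      fix x y assume "fibre_coupling (x, y) \<noteq> 0"
      hence "\<mu> x \<noteq> 0" "\<nu> y \<noteq> 0" by (auto simp: fibre_coupling_def Let_def split: if_splits)
      thus "x \<in> S\<^sub>\<mu>" "y \<in> S\<^sub>\<nu>" using outside_supports by blast+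
    qed
  qed (use finite_supports in simp)
  ultimately show ?thesis
    unfolding is_coupling_def using fibre_coupling_marginal_fst fibre_coupling_marginal_snd by blast
qed

lemma kantorovich_eq_0_if_push_mass_eq: "kantorovich (fibre_dist \<phi>) \<mu> \<nu> = 0"
proof -
  have "cost (fibre_dist \<phi>) fibre_coupling = 0"
    unfolding cost_def by (rule sum.neutral) (auto simp: fibre_coupling_def fibre_dist_def Let_def)
  moreover have "bdd_below {cost (fibre_dist \<phi>) \<omega> | \<omega>. is_coupling \<mu> \<nu> \<omega>}"
    by (rule bdd_belowI[of _ 0]) (use cost_nonneg[OF _ fibre_dist_nonneg] in auto)
  ultimately have "kantorovich (fibre_dist \<phi>) \<mu> \<nu> \<le> 0"
    unfolding kantorovich_eq_Inf_cost using is_coupling_fibre_coupling by (intro cInf_lower2) auto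
  moreover have "kantorovich (fibre_dist \<phi>) \<mu> \<nu> \<ge> 0"
    by (rule kantorovich_nonneg) (rule fibre_dist_nonneg)
  ultimately show ?thesis by linarith
qed

end

lemma kantorovich_fibre_dist_eq_0_iff:
  "kantorovich (fibre_dist \<phi>) \<mu> \<nu> = 0 \<longleftrightarrow> (\<forall>y. push_mass \<phi> \<mu> S\<^sub>\<mu> y = push_mass \<phi> \<nu> S\<^sub>\<nu> y)"
  using push_mass_eq_if_kantorovich_eq_0 kantorovich_eq_0_if_push_mass_eq by blast

end

end

section \<open>Trace distributions of deterministic systems\<close>

definition trace_distr :: "('z, 'a) trans \<Rightarrow> 'z \<Rightarrow> 'a act list \<Rightarrow> real" where
  "trace_distr R z \<alpha> = comps_prob {c \<in> max_comps R z. tr c = \<alpha>}"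

definition vis_distr :: "('z, 'a) trans \<Rightarrow> 'z \<Rightarrow> 'a list \<Rightarrow> real" where
  "vis_distr R z \<gamma> = comps_prob {c \<in> max_comps R z. vis (tr c) = \<gamma>}"

definition trace_support :: "('z, 'a) trans \<Rightarrow> 'z \<Rightarrow> 'a act list set" where
  "trace_support R z = tr ` max_comps R z"

definition vis_support :: "('z, 'a) trans \<Rightarrow> 'z \<Rightarrow> 'a list set" where
  "vis_support R z = (\<lambda>c. vis (tr c)) ` max_comps R z"

lemma comps_prob_group_by:
  assumes "finite C"
  shows "comps_prob {c\<in>C. P (h c)} = (\<Sum>y\<in>{y\<in>h ` C. P y}. comps_prob {c\<in>C. h c = y})"
proof -
  have "comps_prob {c\<in>C. P (h c)} =
      (\<Sum>y\<in>h ` {c\<in>C. P (h c)}. comps_prob {x \<in> {c\<in>C. P (h c)}. h x = y})"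
    unfolding comps_prob_def by (rule sum.image_gen) (use assms in simp)
  also have "h ` {c\<in>C. P (h c)} = {y\<in>h ` C. P y}" by auto
  finally show ?thesis
    by (auto simp: comps_prob_def intro!: sum.cong arg_cong[where f="sum comp_prob"])
qed

lemma trace_distr_outside: "\<alpha> \<notin> trace_support R z \<Longrightarrow> trace_distr R z \<alpha> = 0"
  unfolding trace_distr_def trace_support_def comps_prob_def by (auto intro!: sum.neutral)

lemma vis_distr_outside: "\<gamma> \<notin> vis_support R z \<Longrightarrow> vis_distr R z \<gamma> = 0"
  unfolding vis_distr_def vis_support_def comps_prob_def by (auto intro!: sum.neutral)

lemma trace_distr_nonneg: "trace_distr R z \<alpha> \<ge> 0"
  unfolding trace_distr_def by (rule comps_prob_nonneg)

context deterministic_pts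
begin

lemma finite_trace_support: "comps_bounded R z n \<Longrightarrow> finite (trace_support R z)"
  unfolding trace_support_def using finite_max_comps by blast

lemma finite_vis_support: "comps_bounded R z n \<Longrightarrow> finite (vis_support R z)"
  unfolding vis_support_def using finite_max_comps by blast

lemma sum_trace_distr: "comps_bounded R z n \<Longrightarrow> sum (trace_distr R z) (trace_support R z) = 1"
  using comps_prob_group_by[OF finite_max_comps, of z n "\<lambda>_. True" tr] comps_prob_max_comps[of z n]
  unfolding trace_distr_def trace_support_def by simp

lemma vis_distr_eq_sum_trace_distr:
  "comps_bounded R z n \<Longrightarrow> vis_distr R z \<gamma> = (\<Sum>\<alpha>\<in>{\<alpha>\<in>trace_support R z. vis \<alpha> = \<gamma>}. trace_distr R z \<alpha>)"
  unfolding trace_distr_def vis_distr_def trace_support_def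
  using comps_prob_group_by[OF finite_max_comps, of z n "\<lambda>\<alpha>. vis \<alpha> = \<gamma>" tr] by simp

lemma comps_prob_Cw_eq_sum_vis_distr:
  assumes bounded: "comps_bounded R z n" and S: "finite S" "vis_support R z \<subseteq> S"
  shows "comps_prob (Cw R z \<beta>) = (\<Sum>\<gamma>\<in>{\<gamma>\<in>S. prefix \<beta> \<gamma>}. vis_distr R z \<gamma>)"
proof -
  have "comps_prob (Cw R z \<beta>) = (\<Sum>\<gamma>\<in>{\<gamma>\<in>vis_support R z. prefix \<beta> \<gamma>}. vis_distr R z \<gamma>)"
    unfolding comps_prob_Cw[OF bounded] vis_prefix_prob_def vis_distr_def vis_support_def
    using comps_prob_group_by[OF finite_max_comps[OF bounded], of "prefix \<beta>" "\<lambda>c. vis (tr c)"] by simp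
  also have "\<dots> = (\<Sum>\<gamma>\<in>{\<gamma>\<in>S. prefix \<beta> \<gamma>}. vis_distr R z \<gamma>)"
  proof (rule sum.mono_neutral_left)
    show "finite {\<gamma>\<in>S. prefix \<beta> \<gamma>}" using S(1) by simp
    show "{\<gamma>\<in>vis_support R z. prefix \<beta> \<gamma>} \<subseteq> {\<gamma>\<in>S. prefix \<beta> \<gamma>}" using S(2) by blast
    show "\<forall>\<gamma>\<in>{\<gamma>\<in>S. prefix \<beta> \<gamma>} - {\<gamma>\<in>vis_support R z. prefix \<beta> \<gamma>}. vis_distr R z \<gamma> = 0"
      by (auto intro!: vis_distr_outside)
  qed
  finally show ?thesis .
qed

lemma vis_distr_eq_diff_comps_prob_Cw:
  assumes bounded: "comps_bounded R z n" and S: "finite S" "vis_support R z \<subseteq> S"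
    and L: "finite L" "\<And>\<gamma>. \<gamma> \<in> S \<Longrightarrow> set \<gamma> \<subseteq> L"
  shows "vis_distr R z \<gamma> = comps_prob (Cw R z \<gamma>) - (\<Sum>a\<in>L. comps_prob (Cw R z (\<gamma> @ [a])))"
proof -
  have "\<gamma> \<notin> S \<Longrightarrow> vis_distr R z \<gamma> = 0" by (rule vis_distr_outside) (use S(2) in blast)
  hence "vis_distr R z \<gamma> = (if \<gamma> \<in> S then vis_distr R z \<gamma> else 0)" by simp
  also have "\<dots> = (\<Sum>\<gamma>'\<in>{\<gamma>'\<in>S. prefix \<gamma> \<gamma>'}. vis_distr R z \<gamma>') -
      (\<Sum>a\<in>L. \<Sum>\<gamma>'\<in>{\<gamma>'\<in>S. prefix (\<gamma> @ [a]) \<gamma>'}. vis_distr R z \<gamma>')"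
    by (rule sum_prefix_inversion[OF S(1) L])
  finally show ?thesis by (simp only: comps_prob_Cw_eq_sum_vis_distr[OF bounded S])
qed

end

lemma Cw_probs_eq_iff_vis_distr_eq:
  assumes R1: "deterministic_pts R1" "comps_bounded R1 z1 n1"
    and R2: "deterministic_pts R2" "comps_bounded R2 z2 n2"
  shows "(\<forall>\<beta>. comps_prob (Cw R1 z1 \<beta>) = comps_prob (Cw R2 z2 \<beta>)) \<longleftrightarrow>
     (\<forall>\<gamma>. vis_distr R1 z1 \<gamma> = vis_distr R2 z2 \<gamma>)"
proof -
  define S where "S = vis_support R1 z1 \<union> vis_support R2 z2"
  have S: "finite S"
    using deterministic_pts.finite_vis_support[OF R1] deterministic_pts.finite_vis_support[OF R2]
    by (simp add: S_def)
  have L: "finite (\<Union> (set ` S))" "\<And>\<gamma>. \<gamma> \<in> S \<Longrightarrow> set \<gamma> \<subseteq> \<Union> (set ` S)" using S by auto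
  have sub: "vis_support R1 z1 \<subseteq> S" "vis_support R2 z2 \<subseteq> S" by (auto simp: S_def)
  note inversion1 = deterministic_pts.vis_distr_eq_diff_comps_prob_Cw[OF R1 S sub(1) L]
  note inversion2 = deterministic_pts.vis_distr_eq_diff_comps_prob_Cw[OF R2 S sub(2) L]
  note prefix_sums1 = deterministic_pts.comps_prob_Cw_eq_sum_vis_distr[OF R1 S sub(1)]
  note prefix_sums2 = deterministic_pts.comps_prob_Cw_eq_sum_vis_distr[OF R2 S sub(2)]
  show ?thesis
  proof
    assume "\<forall>\<beta>. comps_prob (Cw R1 z1 \<beta>) = comps_prob (Cw R2 z2 \<beta>)"
    thus "\<forall>\<gamma>. vis_distr R1 z1 \<gamma> = vis_distr R2 z2 \<gamma>"
      by (simp add: inversion1 inversion2)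
  next
    assume "\<forall>\<gamma>. vis_distr R1 z1 \<gamma> = vis_distr R2 z2 \<gamma>"
    thus "\<forall>\<beta>. comps_prob (Cw R1 z1 \<beta>) = comps_prob (Cw R2 z2 \<beta>)"
      by (simp add: prefix_sums1 prefix_sums2)
  qed
qed

lemma d_w_eq_fibre_dist: "d_w = fibre_dist vis"
  by (intro ext) (simp add: d_w_def fibre_dist_def)

lemma
  assumes R1: "deterministic_pts R1" "comps_bounded R1 z1 n1"
    and R2: "deterministic_pts R2" "comps_bounded R2 z2 n2"
  shows kantorovich_trace_distr_eq_0_iff:
      "kantorovich d_w (trace_distr R1 z1) (trace_distr R2 z2) = 0 \<longleftrightarrow>
       (\<forall>\<gamma>. vis_distr R1 z1 \<gamma> = vis_distr R2 z2 \<gamma>)"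
    and kantorovich_trace_distr_nonneg: "kantorovich d_w (trace_distr R1 z1) (trace_distr R2 z2) \<ge> 0"
proof -
  interpret distribution_pair "trace_distr R1 z1" "trace_distr R2 z2" "trace_support R1 z1" "trace_support R2 z2"
    using deterministic_pts.finite_trace_support[OF R1] deterministic_pts.finite_trace_support[OF R2]
      deterministic_pts.sum_trace_distr[OF R1] deterministic_pts.sum_trace_distr[OF R2]
    by unfold_locales (auto simp: trace_distr_outside trace_distr_nonneg)
  show "kantorovich d_w (trace_distr R1 z1) (trace_distr R2 z2) = 0 \<longleftrightarrow>
      (\<forall>\<gamma>. vis_distr R1 z1 \<gamma> = vis_distr R2 z2 \<gamma>)"
    unfolding d_w_eq_fibre_dist kantorovich_fibre_dist_eq_0_iff push_mass_def
    using deterministic_pts.vis_distr_eq_sum_trace_distr[OF R1] deterministic_pts.vis_distr_eq_sum_trace_distr[OF R2]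
    by simp
  show "kantorovich d_w (trace_distr R1 z1) (trace_distr R2 z2) \<ge> 0"
    unfolding d_w_eq_fibre_dist by (rule kantorovich_nonneg[OF fibre_dist_nonneg])
qed

context
  fixes T :: "('s, 'a) trans" and s :: 's and Z :: "('s, 'a) resolution"
  assumes Z: "is_resolution T s Z"
begin

lemma resolution_init: "zinit Z \<in> zstates Z" "zcorr Z (zinit Z) = s"
  using Z by (simp_all add: is_resolution_def)

lemma resolution_target_states: "(z, a, \<pi>) \<in> ztrans Z \<Longrightarrow> set_pmf \<pi> \<subseteq> zstates Z"
  using Z unfolding is_resolution_def by fast

lemma resolution_trans_matched:
  "(z, a, \<pi>) \<in> ztrans Z \<Longrightarrow>
     \<exists>\<pi>'. (zcorr Z z, a, \<pi>') \<in> T \<and> (\<forall>z' \<in> zstates Z. pmf \<pi> z' = pmf \<pi>' (zcorr Z z'))"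
  using Z unfolding is_resolution_def by fast

lemma resolution_deterministic: "deterministic_pts (ztrans Z)"
  using Z unfolding is_resolution_def by unfold_locales fast+

lemma resolution_comp_lift:
  "z \<in> zstates Z \<Longrightarrow> valid_comp (ztrans Z) z c \<Longrightarrow>
     \<exists>c'. valid_comp T (zcorr Z z) c' \<and> length c' = length c"
proof (induction c arbitrary: z)
  case Nil
  thus ?case by (intro exI[of _ "[]"]) simp
next
  case (Cons x c)
  obtain a \<pi> z' where x: "x = (a, \<pi>, z')" by (cases x) auto
  have tr: "(z, a, \<pi>) \<in> ztrans Z" and z': "z' \<in> set_pmf \<pi>" and c: "valid_comp (ztrans Z) z' c"
    using Cons.prems x by auto
  have z'_state: "z' \<in> zstates Z" using resolution_target_states[OF tr] z' by blast
  obtain \<pi>' where tr': "(zcorr Z z, a, \<pi>') \<in> T"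
    and matched: "\<forall>w \<in> zstates Z. pmf \<pi> w = pmf \<pi>' (zcorr Z w)"
    using resolution_trans_matched[OF tr] by blast
  have "zcorr Z z' \<in> set_pmf \<pi>'"
    using matched z'_state z' by (simp add: set_pmf_iff)
  moreover obtain c' where "valid_comp T (zcorr Z z') c'" "length c' = length c"
    using Cons.IH[OF z'_state c] by blast
  ultimately show ?case using tr' by (intro exI[of _ "(a, \<pi>', zcorr Z z') # c'"]) simp
qed

end

lemma resolutions_comps_bounded:
  assumes "finite_proc T s"
  obtains N where "\<And>Z. Z \<in> res T s \<Longrightarrow> comps_bounded (ztrans Z) (zinit Z) N"
proof -
  obtain N where N: "\<forall>c\<in>comps T s. length c \<le> N" using assms by (auto simp: finite_proc_def)
  have "comps_bounded (ztrans Z) (zinit Z) N" if Z: "Z \<in> res T s" for Z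
    unfolding comps_bounded_def
  proof
    have Z: "is_resolution T s Z" using Z by (simp add: res_def)
    fix c assume "c \<in> comps (ztrans Z) (zinit Z)"
    then obtain c' where "valid_comp T s c'" "length c' = length c"
      using resolution_comp_lift[OF Z resolution_init(1)[OF Z], of c] resolution_init(2)[OF Z]
      by (auto simp: comps_def)
    thus "length c \<le> N" using N by (auto simp: comps_def)
  qed
  thus ?thesis using that by blast
qed

lemma TD_eq_trace_distr: "TD Z = trace_distr (ztrans Z) (zinit Z)"
  by (intro ext) (simp add: TD_def trace_distr_def Cmax_def max_comps_def)

definition trivial_resolution :: "'s \<Rightarrow> ('s, 'a) resolution" where
  "trivial_resolution s = \<lparr>zstates = {0}, ztrans = {}, zcorr = (\<lambda>_. s), zinit = 0\<rparr>"

lemma trivial_resolution_in_res: "trivial_resolution s \<in> res T s"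
  by (simp add: res_def is_resolution_def trivial_resolution_def)

section \<open>Finiteness of the trace distributions of resolutions\<close>

definition shift_trace :: "'a act \<Rightarrow> ('a act list \<Rightarrow> real) \<Rightarrow> 'a act list \<Rightarrow> real" where
  "shift_trace a f \<alpha> = (case \<alpha> of [] \<Rightarrow> 0 | b # \<alpha>' \<Rightarrow> if b = a then f \<alpha>' else 0)"

definition point_Nil :: "'a act list \<Rightarrow> real" where
  "point_Nil \<alpha> = (if \<alpha> = [] then 1 else 0)"

context deterministic_pts
begin

lemma trace_distr_no_trans:
  assumes "\<And>a \<pi>. (z, a, \<pi>) \<notin> R"
  shows "trace_distr R z = point_Nil"
proof
  fix \<alpha>
  have "{c \<in> max_comps R z. tr c = \<alpha>} = (if \<alpha> = [] then {[]} else {})"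
    unfolding max_comps_no_trans[OF assms] by auto
  thus "trace_distr R z \<alpha> = point_Nil \<alpha>"
    unfolding trace_distr_def point_Nil_def comps_prob_def by (simp add: comp_prob_def)
qed

lemma trace_distr_trans:
  assumes tr: "(z, a, \<pi>) \<in> R" and bounded: "comps_bounded R z (Suc n)"
  shows "trace_distr R z \<alpha> = (\<Sum>z'\<in>set_pmf \<pi>. pmf \<pi> z' * shift_trace a (trace_distr R z') \<alpha>)"
  unfolding trace_distr_def comps_prob_max_comps_trans[OF tr bounded]
  by (cases \<alpha>) (auto simp: shift_trace_def trace_distr_def comps_prob_def intro!: sum.cong)

lemma trace_distr_trans_relabel:
  assumes tr: "(z, a, \<pi>) \<in> R" and bounded: "comps_bounded R z (Suc n)"
    and xs: "set xs = set_pmf \<pi>" "distinct xs"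
    and matched: "\<And>z'. z' \<in> set_pmf \<pi> \<Longrightarrow> pmf \<pi> z' = pmf \<pi>' (f z')"
  shows "trace_distr R z = (\<lambda>\<alpha>. sum_list (map (\<lambda>(w, g). pmf \<pi>' w * shift_trace a g \<alpha>)
    (map (\<lambda>z'. (f z', trace_distr R z')) xs)))"
proof
  fix \<alpha>
  have "trace_distr R z \<alpha> = (\<Sum>z'\<in>set_pmf \<pi>. pmf \<pi>' (f z') * shift_trace a (trace_distr R z') \<alpha>)"
    unfolding trace_distr_trans[OF tr bounded] by (rule sum.cong) (simp_all add: matched)
  thus "trace_distr R z \<alpha> = sum_list (map (\<lambda>(w, g). pmf \<pi>' w * shift_trace a g \<alpha>)
      (map (\<lambda>z'. (f z', trace_distr R z')) xs))"
    unfolding xs(1)[symmetric] sum.distinct_set_conv_list[OF xs(2)] by (simp add: comp_def)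
qed

end

text \<open>A distribution matched pointwise against \<open>\<pi>\<close> gives each of its points at least the
  least mass of \<open>\<pi>\<close>, so it has at most \<open>support_bound \<pi>\<close> points.\<close>
definition support_bound :: "'s pmf \<Rightarrow> nat" where
  "support_bound \<pi> = nat \<lceil>1 / Min (pmf \<pi> ` set_pmf \<pi>)\<rceil>"

lemma card_support_le_support_bound:
  assumes fin: "finite (set_pmf \<sigma>)" "finite (set_pmf \<pi>)"
    and matched: "\<And>x. x \<in> set_pmf \<sigma> \<Longrightarrow> pmf \<sigma> x = pmf \<pi> (f x)"
  shows "card (set_pmf \<sigma>) \<le> support_bound \<pi>"
proof -
  let ?m = "Min (pmf \<pi> ` set_pmf \<pi>)"
  have "?m > 0" using fin(2) set_pmf_not_empty[of \<pi>] by (auto simp: set_pmf_eq')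
  have "?m \<le> pmf \<sigma> x" if x: "x \<in> set_pmf \<sigma>" for x
  proof -
    have "f x \<in> set_pmf \<pi>" using matched[OF x] x by (simp add: set_pmf_iff)
    thus ?thesis using matched[OF x] fin(2) by (auto intro: Min_le)
  qed
  hence "real (card (set_pmf \<sigma>)) * ?m \<le> sum (pmf \<sigma>) (set_pmf \<sigma>)" by (rule sum_bounded_below)
  also have "\<dots> = 1" by (rule sum_pmf_eq_1) (use fin in auto)
  finally have "real (card (set_pmf \<sigma>)) \<le> 1 / ?m" using \<open>?m > 0\<close> by (simp add: field_simps)
  thus ?thesis unfolding support_bound_def by linarith
qed

text \<open>Contains the trace distribution of every resolution state of depth at most \<open>n\<close> that
  corresponds to \<open>u\<close>; a state with a transition is encoded by the list of pairs
  (state corresponding to a successor, trace distribution of that successor).\<close>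
fun td_candidates :: "('s, 'a) trans \<Rightarrow> nat \<Rightarrow> 's \<Rightarrow> ('a act list \<Rightarrow> real) set" where
  "td_candidates T 0 u = {point_Nil}"
| "td_candidates T (Suc n) u = insert point_Nil (\<Union>(a, \<pi>)\<in>{(a, \<pi>). (u, a, \<pi>) \<in> T}.
      (\<lambda>ws \<alpha>. sum_list (map (\<lambda>(w, f). pmf \<pi> w * shift_trace a f \<alpha>) ws)) `
        {ws. set ws \<subseteq> Sigma (set_pmf \<pi>) (td_candidates T n) \<and> length ws \<le> support_bound \<pi>})"

lemma finite_td_candidates:
  assumes finite_supp: "\<forall>(u, a, \<pi>) \<in> T. finite (set_pmf \<pi>)" and img_fin: "\<forall>u. image_finite T u"
  shows "finite (td_candidates T n u)"
proof (induction n arbitrary: u)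
  case 0
  thus ?case by simp
next
  case (Suc n)
  have "finite {(a, \<pi>). (u, a, \<pi>) \<in> T}" using img_fin by (simp add: image_finite_def)
  moreover have "finite ((\<lambda>ws \<alpha>. sum_list (map (\<lambda>(w, f). pmf \<pi> w * shift_trace a f \<alpha>) ws)) `
        {ws. set ws \<subseteq> Sigma (set_pmf \<pi>) (td_candidates T n) \<and> length ws \<le> support_bound \<pi>})"
    if "(u, a, \<pi>) \<in> T" for a \<pi>
    using finite_supp that Suc.IH by (intro finite_imageI finite_lists_length_le) auto
  ultimately show ?case by (simp only: td_candidates.simps finite_insert) (rule finite_UN_I; auto)
qed

lemma trace_distr_in_td_candidates:
  assumes Z: "is_resolution T s Z" and finite_supp: "\<forall>(u, a, \<pi>) \<in> T. finite (set_pmf \<pi>)"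
    and z: "z \<in> zstates Z" and bounded: "comps_bounded (ztrans Z) z n"
  shows "trace_distr (ztrans Z) z \<in> td_candidates T n (zcorr Z z)"
proof -
  interpret deterministic_pts "ztrans Z" by (rule resolution_deterministic[OF Z])
  from z bounded show ?thesis
  proof (induction n arbitrary: z)
    case 0
    have "trace_distr (ztrans Z) z = point_Nil"
      by (rule trace_distr_no_trans) (rule comps_bounded_0_no_trans[OF 0(2)])
    thus ?case by simp
  next
    case (Suc n)
    show ?case
    proof (cases "\<exists>a \<pi>. (z, a, \<pi>) \<in> ztrans Z")
      case False
      hence "trace_distr (ztrans Z) z = point_Nil" by (intro trace_distr_no_trans) blast
      thus ?thesis by simp
    next
      case True
      then obtain a \<pi> where tr: "(z, a, \<pi>) \<in> ztrans Z" by auto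
      obtain \<pi>' where tr': "(zcorr Z z, a, \<pi>') \<in> T"
        and matched: "\<And>z'. z' \<in> set_pmf \<pi> \<Longrightarrow> pmf \<pi> z' = pmf \<pi>' (zcorr Z z')"
        using resolution_trans_matched[OF Z tr] resolution_target_states[OF Z tr] by blast
      have corr_in_support: "zcorr Z z' \<in> set_pmf \<pi>'" if "z' \<in> set_pmf \<pi>" for z'
        using matched[OF that] that by (simp add: set_pmf_iff)
      obtain xs where xs: "set xs = set_pmf \<pi>" "distinct xs"
        using finite_distinct_list[OF finite_support[OF tr]] by blast
      define ws where "ws = map (\<lambda>z'. (zcorr Z z', trace_distr (ztrans Z) z')) xs"
      have "set ws \<subseteq> Sigma (set_pmf \<pi>') (td_candidates T n)"
        using xs(1) corr_in_support resolution_target_states[OF Z tr]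
          Suc.IH[OF _ comps_bounded_Suc[OF Suc.prems(2) tr]] by (auto simp: ws_def)
      moreover have "length ws \<le> support_bound \<pi>'"
        using card_support_le_support_bound[OF finite_support[OF tr] _ matched] finite_supp tr'
          distinct_card[OF xs(2)] xs(1) by (auto simp: ws_def)
      moreover have "trace_distr (ztrans Z) z =
          (\<lambda>\<alpha>. sum_list (map (\<lambda>(w, f). pmf \<pi>' w * shift_trace a f \<alpha>) ws))"
        unfolding ws_def by (rule trace_distr_trans_relabel[OF tr Suc.prems(2) xs matched])
      ultimately show ?thesis using tr' by (simp only: td_candidates.simps) blast
    qed
  qed
qed

lemma finite_TD_res:
  assumes finite_supp: "\<forall>(u, a, \<pi>) \<in> T. finite (set_pmf \<pi>)" and img_fin: "\<forall>u. image_finite T u"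
    and fin: "finite_proc T s"
  shows "finite (TD ` res T s)"
proof -
  obtain N where N: "\<And>Z. Z \<in> res T s \<Longrightarrow> comps_bounded (ztrans Z) (zinit Z) N"
    using resolutions_comps_bounded[OF fin] by blast
  have "TD ` res T s \<subseteq> td_candidates T N s"
  proof
    fix f assume "f \<in> TD ` res T s"
    then obtain Z where Z: "Z \<in> res T s" "f = TD Z" by blast
    have "is_resolution T s Z" using Z by (simp add: res_def)
    thus "f \<in> td_candidates T N s"
      using trace_distr_in_td_candidates[OF _ finite_supp resolution_init(1) N[OF Z(1)]]
      by (simp add: Z(2) TD_eq_trace_distr resolution_init(2))
  qed
  thus ?thesis using finite_td_candidates[OF finite_supp img_fin] finite_subset by blast
qed

section \<open>The weak trace metric\<close>

lemma
  fixes A :: "real set"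
  assumes A: "finite A" "A \<noteq> {}" and nonneg: "\<And>a. a \<in> A \<Longrightarrow> a \<ge> 0"
  shows Inf_finite_nonneg: "Inf A \<ge> 0"
    and Inf_finite_nonneg_eq_0_iff: "Inf A = 0 \<longleftrightarrow> 0 \<in> A"
proof -
  have Min: "Inf A = Min A" "Min A \<in> A" using cInf_eq_Min[OF A] Min_in[OF A] by simp_all
  thus "Inf A \<ge> 0" using nonneg by simp
  show "Inf A = 0 \<longleftrightarrow> 0 \<in> A"
  proof
    assume "0 \<in> A"
    hence "Min A \<le> 0" by (rule Min_le[OF A(1)])
    thus "Inf A = 0" using Min nonneg[of "Min A"] by simp
  qed (use Min in simp)
qed

lemma
  fixes A :: "real set"
  assumes A: "finite A" "A \<noteq> {}" and nonneg: "\<And>a. a \<in> A \<Longrightarrow> a \<ge> 0"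
  shows Sup_finite_nonneg: "Sup A \<ge> 0"
    and Sup_finite_nonneg_eq_0_iff: "Sup A = 0 \<longleftrightarrow> (\<forall>a\<in>A. a = 0)"
proof -
  have Max: "Sup A = Max A" "Max A \<in> A" using cSup_eq_Max[OF A] Max_in[OF A] by simp_all
  thus "Sup A \<ge> 0" using nonneg by simp
  show "Sup A = 0 \<longleftrightarrow> (\<forall>a\<in>A. a = 0)"
  proof
    assume "Sup A = 0"
    thus "\<forall>a\<in>A. a = 0" using Max Max_ge[OF A(1)] nonneg by (simp add: order_antisym)
  qed (use Max in simp)
qed

lemma
  assumes Z1: "Z1 \<in> res T s" and Z2: "Z2 \<in> res T t"
    and fin: "finite_proc T s" "finite_proc T t"
  shows D_w_nonneg: "D_w Z1 Z2 \<ge> 0"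
    and D_w_eq_0_iff: "D_w Z1 Z2 = 0 \<longleftrightarrow>
      (\<forall>\<alpha>. comps_prob (Cw (ztrans Z1) (zinit Z1) \<alpha>) = comps_prob (Cw (ztrans Z2) (zinit Z2) \<alpha>))"
proof -
  obtain n1 where "\<And>Z. Z \<in> res T s \<Longrightarrow> comps_bounded (ztrans Z) (zinit Z) n1"
    using resolutions_comps_bounded[OF fin(1)] by blast
  hence bounded1: "comps_bounded (ztrans Z1) (zinit Z1) n1" using Z1 by blast
  obtain n2 where "\<And>Z. Z \<in> res T t \<Longrightarrow> comps_bounded (ztrans Z) (zinit Z) n2"
    using resolutions_comps_bounded[OF fin(2)] by blast
  hence bounded2: "comps_bounded (ztrans Z2) (zinit Z2) n2" using Z2 by blast
  have R1: "deterministic_pts (ztrans Z1)" and R2: "deterministic_pts (ztrans Z2)"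
    using Z1 Z2 resolution_deterministic by (auto simp: res_def)
  show "D_w Z1 Z2 \<ge> 0"
    unfolding D_w_def TD_eq_trace_distr by (rule kantorovich_trace_distr_nonneg[OF R1 bounded1 R2 bounded2])
  show "D_w Z1 Z2 = 0 \<longleftrightarrow>
      (\<forall>\<alpha>. comps_prob (Cw (ztrans Z1) (zinit Z1) \<alpha>) = comps_prob (Cw (ztrans Z2) (zinit Z2) \<alpha>))"
    unfolding D_w_def TD_eq_trace_distr kantorovich_trace_distr_eq_0_iff[OF R1 bounded1 R2 bounded2]
      Cw_probs_eq_iff_vis_distr_eq[OF R1 bounded1 R2 bounded2] ..
qed

context
  fixes T :: "('s, 'a) trans" and s t :: 's
  assumes finite_supp: "\<forall>(u, a, \<pi>) \<in> T. finite (set_pmf \<pi>)" and img_fin: "\<forall>u. image_finite T u"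
    and fin: "finite_proc T s" "finite_proc T t"
begin

lemma
  assumes Z: "Z \<in> res T s"
  shows INF_D_w_nonneg: "(INF Z'\<in>res T t. D_w Z Z') \<ge> 0"
    and INF_D_w_eq_0_iff: "(INF Z'\<in>res T t. D_w Z Z') = 0 \<longleftrightarrow> (\<exists>Z'\<in>res T t. D_w Z Z' = 0)"
proof -
  have "D_w Z = kantorovich d_w (TD Z) \<circ> TD" by (auto simp: D_w_def)
  hence finite: "finite (D_w Z ` res T t)"
    by (simp only: image_comp[symmetric]) (intro finite_imageI finite_TD_res[OF finite_supp img_fin fin(2)])
  have nonempty: "D_w Z ` res T t \<noteq> {}" using trivial_resolution_in_res[of t T] by blast
  have nonneg: "\<And>d. d \<in> D_w Z ` res T t \<Longrightarrow> d \<ge> 0" using D_w_nonneg[OF Z _ fin] by blast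
  show "(INF Z'\<in>res T t. D_w Z Z') \<ge> 0"
    by (rule Inf_finite_nonneg[OF finite nonempty nonneg])
  have "0 \<in> D_w Z ` res T t \<longleftrightarrow> (\<exists>Z'\<in>res T t. D_w Z Z' = 0)" by force
  thus "(INF Z'\<in>res T t. D_w Z Z') = 0 \<longleftrightarrow> (\<exists>Z'\<in>res T t. D_w Z Z' = 0)"
    using Inf_finite_nonneg_eq_0_iff[OF finite nonempty nonneg] by simp
qed

lemma
  shows SUP_INF_D_w_nonneg: "(SUP Z\<in>res T s. INF Z'\<in>res T t. D_w Z Z') \<ge> 0"
    and SUP_INF_D_w_eq_0_iff: "(SUP Z\<in>res T s. INF Z'\<in>res T t. D_w Z Z') = 0 \<longleftrightarrow>
      (\<forall>Z\<in>res T s. \<exists>Z'\<in>res T t. D_w Z Z' = 0)"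
proof -
  let ?I = "\<lambda>Z. INF Z'\<in>res T t. D_w Z Z'"
  have "?I ` res T s = (\<lambda>f. Inf (kantorovich d_w f ` TD ` res T t)) ` (TD ` res T s)"
    by (auto simp: D_w_def image_image)
  hence finite: "finite (?I ` res T s)" using finite_TD_res[OF finite_supp img_fin fin(1)] by simp
  have nonempty: "?I ` res T s \<noteq> {}" using trivial_resolution_in_res[of s T] by blast
  have nonneg: "\<And>d. d \<in> ?I ` res T s \<Longrightarrow> d \<ge> 0" using INF_D_w_nonneg by blast
  show "(SUP Z\<in>res T s. ?I Z) \<ge> 0"
    by (rule Sup_finite_nonneg[OF finite nonempty nonneg])
  show "(SUP Z\<in>res T s. ?I Z) = 0 \<longleftrightarrow> (\<forall>Z\<in>res T s. \<exists>Z'\<in>res T t. D_w Z Z' = 0)"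
    using Sup_finite_nonneg_eq_0_iff[OF finite nonempty nonneg] INF_D_w_eq_0_iff by auto
qed

end

theorem proposition5:
  fixes T :: "('s::countable, 'a) trans" and s t :: 's
  assumes finite_supp: "\<forall>(u, a, \<pi>) \<in> T. finite (set_pmf \<pi>)"
    and img_fin: "\<forall>u. image_finite T u"
    and fin: "\<forall>u. finite_proc T u"
  shows "weak_trace_metric T s t = 0 \<longleftrightarrow> weak_trace_equiv T s t"
proof -
  have fin_s: "finite_proc T s" and fin_t: "finite_proc T t" using fin by auto
  have "res T s \<noteq> {}" "res T t \<noteq> {}"
    using trivial_resolution_in_res[of s T] trivial_resolution_in_res[of t T] by blast+
  hence "weak_trace_metric T s t =
      max (SUP Z\<in>res T s. INF Z'\<in>res T t. D_w Z Z') (SUP Z'\<in>res T t. INF Z\<in>res T s. D_w Z' Z)"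
      (is "_ = max ?A ?B")
    unfolding weak_trace_metric_def hausdorff_def by simp
  moreover have "max ?A ?B = 0 \<longleftrightarrow> ?A = 0 \<and> ?B = 0"
    using SUP_INF_D_w_nonneg[OF finite_supp img_fin fin_s fin_t]
      SUP_INF_D_w_nonneg[OF finite_supp img_fin fin_t fin_s] by (auto simp: max_def)
  moreover have "?A = 0 \<and> ?B = 0 \<longleftrightarrow> weak_trace_equiv T s t"
    unfolding SUP_INF_D_w_eq_0_iff[OF finite_supp img_fin fin_s fin_t]
      SUP_INF_D_w_eq_0_iff[OF finite_supp img_fin fin_t fin_s] weak_trace_equiv_def
    using D_w_eq_0_iff[OF _ _ fin_s fin_t] D_w_eq_0_iff[OF _ _ fin_t fin_s] by meson
  ultimately show ?thesis by simp
qed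

end
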